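(* Let $\{X_i\}_{i\ge1}$ be independent, identically distributed random variables on $((0,1),\mathcal{B},\mathcal{L})$, each exponentially distributed with rate $1$. For $t\ge1$ let $[t]_E=2k$ if $2k-1\le t<2k+1$, $k\in\mathbb{N}$. Define $D_1=[\exp(X_1)]_E$ and $D_{n+1}=\left[\frac{(D_n-1)(D_n+1)}{D_n}\exp(X_{n+1})\right]_E$. Then $$\mathcal{L}\left(\{x\in(0,1)\colon D_{n+1}(x)=D_n(x)\text{ for infinitely many }n\}\right)=0.$$
   Context: $\mathcal{B}$ denotes the Borel $\sigma$-algebra of $(0,1)$ and $\mathcal{L}$ Lebesgue measure. *)

theory Defs
  imports "HOL-Probability.Probability"
begin

definition unitM :: "real measure" where
  "unitM = restrict_space lborel {0<..<1}"

definition evround :: "real \<Rightarrow> real" where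
  "evround t = 2 * of_int \<lfloor>(t + 1) / 2\<rfloor>"

text \<open>Digits D_n, n \<ge> 1 (D 0 is an unused dummy value).\<close>
fun digD :: "(nat \<Rightarrow> real \<Rightarrow> real) \<Rightarrow> nat \<Rightarrow> real \<Rightarrow> real" where
  "digD X 0 x = 0"
| "digD X (Suc 0) x = evround (exp (X 1 x))"
| "digD X (Suc (Suc n)) x =
     (let d = digD X (Suc n) x in evround ((d - 1) * (d + 1) / d * exp (X (Suc (Suc n)) x)))"

end

theory Submission
  imports Defs
begin

(* The digits D_n are even, at least 2 and non-decreasing. If D_{n+1} = D_n then
   exp X_{n+1} < D_n / (D_n - 1), hence X_{n+1} < 2 / D_n. Whenever X_i > ln 8 the digit at least
   doubles, so 2 / D_n is bounded by a product of independent factors (1/2 if X_i > ln 8, else 1),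
   each of mean 15/16. By Markov's inequality and Borel-Cantelli this product is eventually below
   (31/32)^n, while P(X_{n+1} <= (31/32)^n) <= (31/32)^n shows that X_{n+1} is eventually above
   (31/32)^n. *)

lemma evround_gt: "t - 1 < evround t"
proof -
  have "(t + 1) / 2 < of_int \<lfloor>(t + 1) / 2\<rfloor> + 1"
    by linarith
  then show ?thesis
    unfolding evround_def by (simp add: field_simps)
qed

lemma evround_even: "\<exists>k. evround t = 2 * of_int k"
  unfolding evround_def by blast

lemma evround_ge_even:
  assumes "d = 2 * of_int k" and "d - 1 \<le> t"
  shows "d \<le> evround t"
proof -
  have "k \<le> \<lfloor>(t + 1) / 2\<rfloor>"
    using assms by (subst le_floor_iff) simp
  then show ?thesis
    unfolding evround_def assms(1) by simp
qed

definition digit_step :: "real \<Rightarrow> real \<Rightarrow> real" where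
  "digit_step d y = evround ((d - 1) * (d + 1) / d * exp y)"

lemma digD_Suc_Suc:
  "digD X (Suc (Suc n)) x = digit_step (digD X (Suc n) x) (X (Suc (Suc n)) x)"
  by (simp add: digit_step_def Let_def)

lemma digit_step_ge:
  assumes "d = 2 * of_int k" and "2 \<le> d" and "0 \<le> y"
  shows "d \<le> digit_step d y"
proof -
  have "d - 1 \<le> (d - 1) * (d + 1) / d"
    using assms(2) by (simp add: field_simps)
  also have "\<dots> \<le> (d - 1) * (d + 1) / d * exp y"
    using assms(2,3) mult_left_mono[of 1 "exp y" "(d - 1) * (d + 1) / d"] by simp
  finally show ?thesis
    unfolding digit_step_def by (rule evround_ge_even[OF assms(1)])
qed

lemma digit_step_ge_double:
  assumes "2 \<le> d" and "ln 8 < y"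
  shows "2 * d \<le> digit_step d y"
proof -
  have "2 * d \<le> d * d"
    using assms(1) by (intro mult_right_mono) auto
  moreover have "(2 * d + 1) * d = 2 * (d * d) + d" "(d - 1) * (d + 1) * 8 = 8 * (d * d) - 8"
    by (simp_all add: algebra_simps)
  ultimately have "(2 * d + 1) * d \<le> (d - 1) * (d + 1) * 8"
    using assms(1) by linarith
  then have "2 * d + 1 \<le> (d - 1) * (d + 1) * 8 / d"
    using assms(1) by (simp add: pos_le_divide_eq)
  then have "2 * d \<le> (d - 1) * (d + 1) / d * 8 - 1"
    by simp
  also have "\<dots> < (d - 1) * (d + 1) / d * exp y - 1"
    using assms exp_less_cancel_iff[of "ln 8" y]
    by (intro diff_strict_right_mono mult_strict_left_mono) auto
  also have "\<dots> < digit_step d y"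
    unfolding digit_step_def by (rule evround_gt)
  finally show ?thesis by simp
qed

lemma digit_step_fixed_imp_less:
  assumes "2 \<le> d" and "digit_step d y = d"
  shows "y < 2 / d"
proof -
  have "(d - 1) * (d + 1) / d * exp y < d + 1"
    using evround_gt assms(2) unfolding digit_step_def by (metis diff_less_eq)
  then have "(d + 1) * (exp y * (d - 1)) < (d + 1) * d"
    using assms(1) by (simp add: field_simps)
  then have "exp y * (d - 1) < d"
    using assms(1) by (subst (asm) mult_less_cancel_left_pos) auto
  then have "exp y < d / (d - 1)"
    using assms(1) by (simp add: pos_less_divide_eq)
  then have "y < ln (d / (d - 1))"
    using assms(1) ln_less_cancel_iff[of "exp y" "d / (d - 1)"] by simp
  also have "\<dots> \<le> d / (d - 1) - 1"
    using assms(1) by (intro ln_le_minus_one) auto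
  also have "\<dots> \<le> 2 / d"
    using assms(1) by (simp add: field_simps)
  finally show ?thesis .
qed

lemma digD_Suc_even: "\<exists>k. digD X (Suc n) x = 2 * of_int k"
  by (cases n) (auto simp: Let_def evround_even)

lemma digD_ge_two:
  assumes "\<And>i. 0 \<le> X (Suc i) x"
  shows "2 \<le> digD X (Suc n) x"
proof (induction n)
  case 0
  have "1 \<le> exp (X 1 x)"
    using assms[of 0] by simp
  then show ?case
    by (simp add: evround_ge_even[where k = 1])
next
  case (Suc n)
  obtain k where "digD X (Suc n) x = 2 * of_int k"
    using digD_Suc_even by blast
  then show ?case
    using Suc assms digit_step_ge by (metis digD_Suc_Suc order_trans)
qed

lemma digD_mono:
  assumes "\<And>i. 0 \<le> X (Suc i) x"
  shows "digD X (Suc n) x \<le> digD X (Suc (Suc n)) x"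
  using digD_Suc_even digit_step_ge digD_ge_two assms unfolding digD_Suc_Suc by metis

definition halving_weight :: "real \<Rightarrow> real" where
  "halving_weight y = (if ln 8 < y then 1 / 2 else 1)"

lemma two_div_digD_le_prod_halving_weight:
  assumes "\<And>i. 0 \<le> X (Suc i) x"
  shows "2 / digD X (Suc n) x \<le> (\<Prod>i\<in>{2..Suc n}. halving_weight (X i x))"
proof (induction n)
  case 0
  show ?case
    using digD_ge_two[of X x 0, OF assms] by simp
next
  case (Suc n)
  let ?d = "digD X (Suc n) x" and ?d' = "digD X (Suc (Suc n)) x" and ?y = "X (Suc (Suc n)) x"
  have "2 / ?d' \<le> halving_weight ?y * (2 / ?d)"
  proof (cases "ln 8 < ?y")
    case True
    then have "2 * ?d \<le> ?d'"
      unfolding digD_Suc_Suc using digit_step_ge_double digD_ge_two[of X x, OF assms] by blast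
    then show ?thesis
      using True digD_ge_two[of X x n, OF assms] by (simp add: halving_weight_def field_simps)
  next
    case False
    then show ?thesis
      using digD_mono[of X x n, OF assms] digD_ge_two[of X x n, OF assms]
      by (simp add: halving_weight_def frac_le)
  qed
  also have "\<dots> \<le> halving_weight ?y * (\<Prod>i\<in>{2..Suc n}. halving_weight (X i x))"
    using Suc by (intro mult_left_mono) (auto simp: halving_weight_def)
  also have "\<dots> = (\<Prod>i\<in>{2..Suc (Suc n)}. halving_weight (X i x))"
    by (simp add: atLeastAtMostSuc_conv)
  finally show ?case .
qed

lemma digD_stall_imp_less_prod_halving_weight:
  assumes "\<And>i. 0 \<le> X (Suc i) x" and "digD X (Suc (Suc n)) x = digD X (Suc n) x"
  shows "X (Suc (Suc n)) x < (\<Prod>i\<in>{2..Suc n}. halving_weight (X i x))"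
  using digit_step_fixed_imp_less[OF digD_ge_two[of X x, OF assms(1)]] assms(2)
    two_div_digD_le_prod_halving_weight[of X x, OF assms(1)]
  unfolding digD_Suc_Suc by (meson less_le_trans)

lemma borel_measurable_evround[measurable]: "evround \<in> borel_measurable borel"
  unfolding evround_def by measurable

lemma borel_measurable_halving_weight[measurable]: "halving_weight \<in> borel_measurable borel"
  unfolding halving_weight_def by measurable

lemma borel_measurable_digD[measurable]:
  assumes [measurable]: "\<And>i. X (Suc i) \<in> borel_measurable M"
  shows "digD X n \<in> borel_measurable M"
proof -
  have "digD X (Suc n) \<in> borel_measurable M" for n
  proof (induction n)
    case 0
    have [measurable]: "X 1 \<in> borel_measurable M"
      using assms[of 0] by simp
    show ?case
      by simp
  next
    case (Suc n)
    note Suc[measurable]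
    show ?case
      by (simp add: Let_def)
  qed
  moreover have "digD X 0 = (\<lambda>_. 0)"
    by (rule ext) simp
  ultimately show ?thesis
    by (cases n) simp_all
qed

lemma (in prob_space) AE_exponential_nonneg:
  assumes "distributed M lborel Y (exponential_density l)"
  shows "AE x in M. 0 \<le> Y x"
  by (subst distributed_AE2[OF assms]) (auto simp: erlang_density_def)

lemma (in prob_space) exponential_prob_le:
  assumes "distributed M lborel Y (exponential_density l)" and "0 < l" and "0 \<le> a"
  shows "\<P>(x in M. Y x \<le> a) \<le> l * a"
proof -
  have "\<P>(x in M. Y x \<le> a) = 1 - exp (- a * l)"
    by (rule exponential_distributedD_le[OF assms(1,3,2)])
  also have "\<dots> \<le> l * a"
    using exp_ge_add_one_self[of "- a * l"] by (simp add: mult.commute)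
  finally show ?thesis .
qed

lemma (in prob_space) AE_eventually_notin_geometric:
  assumes "\<And>m. A m \<in> events" and "\<And>m. prob (A m) \<le> C * q ^ m" and "0 \<le> q" and "q < 1"
  shows "AE x in M. eventually (\<lambda>m. x \<notin> A m) sequentially"
proof -
  have "summable (\<lambda>m. prob (A m))"
    by (rule summable_comparison_test[where g = "\<lambda>m. C * q ^ m"])
      (use assms in \<open>auto intro!: summable_mult summable_geometric\<close>)
  then have "AE x in M. eventually (\<lambda>m. x \<in> space M - A m) sequentially"
    using assms(1) by (intro borel_cantelli_AE1) (auto simp: emeasure_eq_measure)
  then show ?thesis
    by eventually_elim (auto elim: eventually_mono)
qed

lemma (in prob_space) AE_eventually_exponential_gt_power:
  assumes "\<And>m. distributed M lborel (Y m) (exponential_density l)" and "0 < l"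
    and "0 \<le> r" and "r < 1"
  shows "AE x in M. eventually (\<lambda>m. r ^ m < Y m x) sequentially"
proof -
  have "AE x in M. eventually (\<lambda>m. x \<notin> {x \<in> space M. Y m x \<le> r ^ m}) sequentially"
  proof (rule AE_eventually_notin_geometric)
    show "{x \<in> space M. Y m x \<le> r ^ m} \<in> events" for m
      using distributed_measurable[OF assms(1)[of m]] by measurable
    show "prob {x \<in> space M. Y m x \<le> r ^ m} \<le> l * r ^ m" for m
      using exponential_prob_le[OF assms(1,2)] assms(3) by simp
  qed fact+
  then show ?thesis
    using AE_space by eventually_elim (auto elim: eventually_mono)
qed

lemma (in prob_space) prob_prod_ge_le:
  fixes Z :: "'i \<Rightarrow> 'a \<Rightarrow> real"
  assumes "indep_vars (\<lambda>_. borel) Z J" and "finite J"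
    and "\<And>i. i \<in> J \<Longrightarrow> integrable M (Z i)" and "\<And>i x. i \<in> J \<Longrightarrow> 0 \<le> Z i x"
    and "\<And>i. i \<in> J \<Longrightarrow> expectation (Z i) = c" and "0 < t"
  shows "\<P>(x in M. t \<le> (\<Prod>i\<in>J. Z i x)) \<le> c ^ card J / t"
proof -
  have "\<P>(x in M. t \<le> (\<Prod>i\<in>J. Z i x)) \<le> expectation (\<lambda>x. \<Prod>i\<in>J. Z i x) / t"
    using assms
    by (intro integral_Markov_inequality_measure[where A = "space M"] indep_vars_integrable)
      (auto intro!: AE_I2 prod_nonneg)
  also have "expectation (\<lambda>x. \<Prod>i\<in>J. Z i x) = c ^ card J"
    using assms by (simp add: indep_vars_lebesgue_integral)
  finally show ?thesis .
qed

lemma (in prob_space) expectation_halving_weight: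
  assumes "distributed M lborel Y (exponential_density 1)"
  shows "integrable M (\<lambda>x. halving_weight (Y x))"
    and "expectation (\<lambda>x. halving_weight (Y x)) = 15 / 16"
proof -
  note [measurable] = distributed_measurable[OF assms]
  show "integrable M (\<lambda>x. halving_weight (Y x))"
    by (rule integrable_const_bound[where B = 1]) (auto simp: halving_weight_def)
  have "expectation (\<lambda>x. halving_weight (Y x))
      = expectation (\<lambda>x. 1 - 1 / 2 * indicator {x \<in> space M. ln 8 < Y x} x)"
    by (intro Bochner_Integration.integral_cong) (auto simp: halving_weight_def)
  also have "\<dots> = 1 - 1 / 2 * \<P>(x in M. ln 8 < Y x)"
    by (subst Bochner_Integration.integral_diff)
      (auto simp: prob_space less_top[symmetric] emeasure_finite
        intro!: integrable_real_indicator)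
  also have "\<P>(x in M. ln 8 < Y x) = 1 / 8"
    using exponential_distributedD_gt[OF assms, of "ln 8"] by (simp add: exp_minus)
  finally show "expectation (\<lambda>x. halving_weight (Y x)) = 15 / 16"
    by simp
qed

lemma (in prob_space) AE_eventually_prod_halving_weight_less:
  assumes indep: "indep_vars (\<lambda>_. borel) X {1..}"
    and exp: "\<And>i. i \<ge> 1 \<Longrightarrow> distributed M lborel (X i) (exponential_density 1)"
  shows "AE x in M. eventually
    (\<lambda>m. (\<Prod>i\<in>{2..Suc m}. halving_weight (X i x)) < (31 / 32) ^ m) sequentially"
proof -
  let ?W = "\<lambda>i x. halving_weight (X i x)"
  let ?A = "\<lambda>m. {x \<in> space M. (31 / 32) ^ m \<le> (\<Prod>i\<in>{2..Suc m}. ?W i x)}"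
  have W_meas: "?W i \<in> borel_measurable M" if "i \<in> {2..Suc m}" for i m
    using distributed_measurable[OF exp] that
    by (intro measurable_compose[OF _ borel_measurable_halving_weight]) auto
  have "AE x in M. eventually (\<lambda>m. x \<notin> ?A m) sequentially"
  proof (rule AE_eventually_notin_geometric)
    have [measurable]: "(\<lambda>x. \<Prod>i\<in>{2..Suc m}. ?W i x) \<in> borel_measurable M" for m
      by (rule borel_measurable_prod) (rule W_meas)
    show "?A m \<in> events" for m
      by measurable
    have indep_W: "indep_vars (\<lambda>_. borel) ?W {2..Suc m}" for m
      by (rule indep_vars_compose2[OF indep_vars_subset[OF indep]]) auto
    have "prob (?A m) \<le> (15 / 16) ^ card {2..Suc m} / (31 / 32) ^ m" for m
    proof (rule prob_prod_ge_le[OF indep_W])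
      show "integrable M (?W i)" "expectation (?W i) = 15 / 16" if "i \<in> {2..Suc m}" for i
        using expectation_halving_weight[OF exp] that by auto
    qed (auto simp: halving_weight_def)
    then show "prob (?A m) \<le> 1 * (30 / 31) ^ m" for m
      by (simp add: power_divide[symmetric])
  qed auto
  then show ?thesis
    using AE_space by eventually_elim (auto elim!: eventually_mono simp del: prod.cl_ivl_Suc)
qed

lemma AE_eventually_digD_neq:
  fixes M :: "real measure"
  assumes "prob_space M"
    and indep: "prob_space.indep_vars M (\<lambda>_. borel) X {1..}"
    and exp: "\<And>i. i \<ge> 1 \<Longrightarrow> distributed M lborel (X i) (exponential_density 1)"
  shows "AE x in M. eventually (\<lambda>n. digD X (Suc (Suc n)) x \<noteq> digD X (Suc n) x) sequentially"
proof -
  interpret prob_space M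
    by fact
  have "AE x in M. eventually (\<lambda>m. (31 / 32) ^ m < X (Suc (Suc m)) x) sequentially"
    using exp by (intro AE_eventually_exponential_gt_power) auto
  moreover have "AE x in M. eventually
      (\<lambda>m. (\<Prod>i\<in>{2..Suc m}. halving_weight (X i x)) < (31 / 32) ^ m) sequentially"
    using indep exp by (rule AE_eventually_prod_halving_weight_less)
  moreover have "AE x in M. \<forall>i. 0 \<le> X (Suc i) x"
    unfolding AE_all_countable using exp by (auto intro: AE_exponential_nonneg)
  ultimately show ?thesis
  proof eventually_elim
    case (elim x)
    show ?case
      using eventually_conj[OF elim(1,2)]
      by (rule eventually_mono)
        (use digD_stall_imp_less_prod_halving_weight[of X x, OF elim(3)[rule_format]] in force)
  qed
qed

theorem lemma3p2:
  fixes X :: "nat \<Rightarrow> real \<Rightarrow> real"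
  assumes "prob_space.indep_vars unitM (\<lambda>_. borel) X {1..}"
    and "\<And>i. i \<ge> 1 \<Longrightarrow> distributed unitM lborel (X i) (exponential_density 1)"
  shows "{x \<in> space unitM. \<exists>\<^sub>\<infinity>n. n \<ge> 1 \<and> digD X (Suc n) x = digD X n x} \<in> sets unitM
    \<and> emeasure unitM {x \<in> space unitM. \<exists>\<^sub>\<infinity>n. n \<ge> 1 \<and> digD X (Suc n) x = digD X n x} = 0"
proof -
  have "prob_space unitM"
    unfolding unitM_def by (rule prob_space_restrict_space) auto
  have [measurable]: "X (Suc i) \<in> borel_measurable unitM" for i
    using distributed_measurable[OF assms(2)[of "Suc i"]] by simp
  let ?S = "{x \<in> space unitM. \<exists>\<^sub>\<infinity>n. n \<ge> 1 \<and> digD X (Suc n) x = digD X n x}"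
  have S_sets: "?S \<in> sets unitM"
    unfolding INFM_nat by measurable
  have "AE x in unitM. eventually (\<lambda>n. digD X (Suc (Suc n)) x \<noteq> digD X (Suc n) x) sequentially"
    using \<open>prob_space unitM\<close> assms by (rule AE_eventually_digD_neq)
  then have "AE x in unitM. \<not> (\<exists>\<^sub>\<infinity>n. n \<ge> 1 \<and> digD X (Suc n) x = digD X n x)"
    by eventually_elim
      (subst not_INFM, subst MOST_Suc_iff[symmetric], simp add: cofinite_eq_sequentially)
  then have "emeasure unitM ?S = 0"
    using AE_iff_measurable[OF S_sets] by auto
  with S_sets show ?thesis
    by simp
qed

end
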